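(* For positive reals $\varepsilon,T$ let $\delta(\varepsilon,T):=\min\{\varepsilon/2,\ \varepsilon^3/(240T^5)\}$. Let $\Gamma\in\mathbb{R}^{p\times p}$ be a connected continuous-time interconnection, $r\in\mathbb{R}^p$ with $r^T\Gamma=0$, $r^T\mathbf 1=1$, and $\Omega$ symmetric positive definite with $(\Gamma-\mathbf 1r^T)^T\Omega+\Omega(\Gamma-\mathbf 1r^T)=-I_p$. Let $\rho(\Gamma):=\sigma_{\max}(\Omega)\max\{1,|\Gamma|^3\}$ and $V(\mathbf x):=\mathbf x^T(\Omega\otimes I_n)\mathbf x$. Then for every Riemann-integrable $Q:\mathbb{R}_{\ge0}\to\overline{\mathcal Q}_n$ with $\sigma_{\min}\big(\int_0^TQ_t\,dt\big)\ge\varepsilon$, the solution of $\dot{\mathbf x}=(\Gamma\otimes Q_t)\mathbf x$ satisfies $$V(\mathbf x(T)-\bar{\mathbf x})\le\Big(1-\frac{\delta(\varepsilon,T)}{\rho(\Gamma)}\Big)V(\mathbf x(0)-\bar{\mathbf x}),$$ where $\bar{\mathbf x}:=(\mathbf 1r^T\otimes I_n)\mathbf x(0)$.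
   Context: $|\cdot|$ Euclidean norm / induced 2-norm; $\mathbf 1$ all-ones vector; $\otimes$ Kronecker product; $\sigma_{\max},\sigma_{\min}$ largest/smallest singular values; $\mathcal Q_n$ symmetric positive semidefinite $n\times n$ matrices and $\overline{\mathcal Q}_n=\{R\in\mathcal Q_n:|R|\le1\}$. A continuous-time interconnection: $\gamma_{ij}\ge0$ ($i\ne j$), $\gamma_{ii}=-\sum_{j\ne i}\gamma_{ij}$; graph edge $(n_i,n_j)$ iff $\gamma_{ij}>0$; connected means some node is reachable by directed path from every other node. *)

theory Defs
  imports "HOL-Analysis.Analysis"
begin

text \<open>Kronecker product; the index pair (i,k) of type 'p \<times> 'n corresponds to
  the row (i-1)n+k of the usual block ordering.\<close>
definition kron :: "real^'p^'p \<Rightarrow> real^'n^'n \<Rightarrow> real^('p \<times> 'n)^('p \<times> 'n)" where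
  "kron A B = (\<chi> a b. A$(fst a)$(fst b) * B$(snd a)$(snd b))"

definition sigma_max :: "real^'n^'n \<Rightarrow> real" where
  "sigma_max M = Sup {norm (M *v v) | v. norm v = 1}"

definition sigma_min :: "real^'n^'n \<Rightarrow> real" where
  "sigma_min M = Inf {norm (M *v v) | v. norm v = 1}"

definition Qbar :: "(real^'n^'n) set" where
  "Qbar = {R. transpose R = R \<and> (\<forall>v. 0 \<le> v \<bullet> (R *v v)) \<and> sigma_max R \<le> 1}"

definition ct_interconnection :: "real^'p^'p \<Rightarrow> bool" where
  "ct_interconnection G \<longleftrightarrow>
     (\<forall>i j. i \<noteq> j \<longrightarrow> 0 \<le> G$i$j) \<and> (\<forall>i. G$i$i = - (\<Sum>j\<in>UNIV-{i}. G$i$j))"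

definition graph_edges :: "real^'p^'p \<Rightarrow> ('p \<times> 'p) set" where
  "graph_edges G = {(i,j). 0 < G$i$j}"

definition connected_interconnection :: "real^'p^'p \<Rightarrow> bool" where
  "connected_interconnection G \<longleftrightarrow> ct_interconnection G \<and>
     (\<exists>k. \<forall>i. (i,k) \<in> (graph_edges G)\<^sup>*)"

text \<open>Riemann integrability on a compact interval (uniform-mesh gauges).\<close>
definition riemann_integrable_on :: "(real \<Rightarrow> 'a::real_normed_vector) \<Rightarrow> real \<Rightarrow> real \<Rightarrow> bool" where
  "riemann_integrable_on f a b \<longleftrightarrow> (\<exists>I. \<forall>e>0. \<exists>d>0. \<forall>D.
     D tagged_division_of {a..b} \<and> (\<lambda>x. ball x d) fine D \<longrightarrow>
       norm ((\<Sum>(x,K)\<in>D. Henstock_Kurzweil_Integration.content K *\<^sub>R f x) - I) < e)"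

definition delta_eps :: "real \<Rightarrow> real \<Rightarrow> real" where
  "delta_eps e T = min (e/2) (e^3 / (240 * T^5))"

definition ones_r :: "real^'p \<Rightarrow> real^'p^'p" where
  "ones_r r = (\<chi> i j. r$j)"

end

theory Submission
  imports Defs
begin

text \<open>Write \<open>e(t) = x(t) - xbar\<close> with the consensus value \<open>xbar = (\<one> r\<^sup>T \<otimes> I) x(0)\<close>. Zero row sums of
  \<open>\<Gamma>\<close> make \<open>\<Gamma> \<otimes> Q\<^sub>t\<close> annihilate \<open>xbar\<close>, so \<open>e\<close> solves the same equation, and \<open>r\<^sup>T\<Gamma> = 0\<close> keeps the
  weighted average \<open>(r\<^sup>T \<otimes> I) e\<close> at its initial value \<open>0\<close>. On that subspace the Lyapunov equation
  turns \<open>d/dt V(e)\<close> into \<open>-e\<^sup>T(I \<otimes> Q\<^sub>t)e\<close>, so \<open>V(e(T)) = V(e(0)) - S\<close> with \<open>S\<close> the dissipated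
  energy. Since \<open>e(t) - e(0) = \<integral>(\<Gamma> \<otimes> Q)e\<close>, an AM-GM estimate in the seminorm of \<open>I \<otimes> Q\<^sub>u\<close> gives
  \<open>|e(t) - e(0)|\<^sup>2 \<le> T g\<^sup>2 S\<close> with \<open>g = max 1 |\<Gamma>|\<close>; comparing \<open>e(0)\<close> with \<open>e(t)\<close> inside the excitation
  integral then yields \<open>\<epsilon> |e(0)|\<^sup>2 \<le> (1 + T g)\<^sup>2 S\<close>. Together with \<open>V(e(0)) \<le> \<sigma>\<^sub>m\<^sub>a\<^sub>x(\<Omega>) |e(0)|\<^sup>2\<close>
  and the elementary bound \<open>\<delta>(\<epsilon>, T) (1 + T g)\<^sup>2 \<le> \<epsilon> g\<^sup>3\<close>, this is the claimed contraction.\<close>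

section \<open>Block vectors and Kronecker products\<close>

text \<open>A vector indexed by \<open>'p \<times> 'n\<close> is a \<open>p \<times> n\<close> array: \<open>block y i\<close> is its \<open>i\<close>-th block of length
  \<open>n\<close> (the \<open>i\<close>-th agent's state), \<open>slice y k\<close> collects the \<open>k\<close>-th coordinate of every block.\<close>

definition block :: "real^('p::finite \<times> 'n::finite) \<Rightarrow> 'p \<Rightarrow> real^'n" where
  "block y i = (\<chi> k. y$(i,k))"

definition slice :: "real^('p::finite \<times> 'n::finite) \<Rightarrow> 'n \<Rightarrow> real^'p" where
  "slice y k = (\<chi> i. y$(i,k))"

lemma sum_UNIV_pair:
  "(\<Sum>a\<in>(UNIV::('p::finite \<times> 'n::finite) set). f a) = (\<Sum>i\<in>UNIV. \<Sum>k\<in>UNIV. f (i,k))"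
  by (simp add: sum.cartesian_product)

lemma inner_eq_sum_block: "(y::real^('p::finite \<times> 'n::finite)) \<bullet> z = (\<Sum>i\<in>UNIV. block y i \<bullet> block z i)"
  by (simp add: inner_vec_def sum_UNIV_pair block_def)

lemma inner_eq_sum_slice: "(y::real^('p::finite \<times> 'n::finite)) \<bullet> z = (\<Sum>k\<in>UNIV. slice y k \<bullet> slice z k)"
  unfolding inner_vec_def sum_UNIV_pair by (subst sum.swap) (simp add: slice_def)

lemma norm_power2_eq_sum_block:
  "norm (y::real^('p::finite \<times> 'n::finite))^2 = (\<Sum>i\<in>UNIV. norm (block y i)^2)"
  by (simp add: power2_norm_eq_inner inner_eq_sum_block[of y y])

lemma norm_power2_eq_sum_slice:
  "norm (y::real^('p::finite \<times> 'n::finite))^2 = (\<Sum>k\<in>UNIV. norm (slice y k)^2)"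
  by (simp add: power2_norm_eq_inner inner_eq_sum_slice[of y y])

lemma block_add: "block (y + z) i = block y i + block z i"
  by (simp add: block_def vec_eq_iff)

lemma block_scaleR: "block (c *\<^sub>R y) i = c *\<^sub>R block y i"
  by (simp add: block_def vec_eq_iff)

lemma block_kron: "block (kron A B *v y) i = (\<Sum>j\<in>UNIV. A$i$j *\<^sub>R (B *v block y j))"
proof -
  have "(\<Sum>a\<in>UNIV. A$i$fst a * B$k$snd a * y$a) = (\<Sum>j\<in>UNIV. A$i$j * (\<Sum>m\<in>UNIV. B$k$m * y$(j,m)))" for k
    unfolding sum_UNIV_pair sum_distrib_left by (simp add: mult.assoc)
  then show ?thesis
    by (simp add: vec_eq_iff block_def kron_def matrix_vector_mult_def)
qed

lemma block_kron_mat1: "block (kron (mat 1) B *v y) i = B *v block y i"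
proof -
  have "(\<Sum>j\<in>UNIV. (mat 1)$i$j *\<^sub>R (B *v block y j)) = (\<Sum>j\<in>UNIV. if i = j then B *v block y j else 0)"
    by (rule sum.cong) (auto simp: mat_def)
  then show ?thesis by (simp add: block_kron)
qed

lemma slice_kron_mat1:
  fixes y :: "real^('p::finite \<times> 'n::finite)"
  shows "slice (kron A (mat 1) *v y) k = A *v slice y k"
proof -
  have "(\<Sum>m\<in>UNIV. \<Sum>j\<in>UNIV. A$i$j * (mat 1 :: real^'n^'n)$k$m * y$(j,m)) = (\<Sum>j\<in>UNIV. A$i$j * y$(j,k))"
    for i k
  proof -
    have "(\<Sum>m\<in>UNIV. \<Sum>j\<in>UNIV. A$i$j * (mat 1 :: real^'n^'n)$k$m * y$(j,m))
        = (\<Sum>m\<in>UNIV. if k = m then (\<Sum>j\<in>UNIV. A$i$j * y$(j,m)) else 0)"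
      by (rule sum.cong) (auto simp: mat_def)
    then show ?thesis by simp
  qed
  then show ?thesis
    unfolding vec_eq_iff slice_def kron_def matrix_vector_mult_def sum_UNIV_pair
    by (subst sum.swap) simp
qed

lemma kron_matrix_mult: "kron A B ** kron C D = kron (A ** C) (B ** D)"
proof -
  have "(\<Sum>c\<in>UNIV. A$fst a$fst c * B$snd a$snd c * (C$fst c$fst b * D$snd c$snd b))
      = (\<Sum>j\<in>UNIV. A$fst a$j * C$j$fst b) * (\<Sum>m\<in>UNIV. B$snd a$m * D$m$snd b)" for a b
    unfolding sum_UNIV_pair sum_product by (intro sum.cong refl) (simp add: mult_ac)
  then show ?thesis
    by (simp add: vec_eq_iff kron_def matrix_matrix_mult_def)
qed

lemma transpose_kron: "transpose (kron A B) = kron (transpose A) (transpose B)"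
  by (simp add: vec_eq_iff kron_def transpose_def)

lemma inner_matrix_vector_transpose: "(w::real^'n::finite) \<bullet> (A *v z) = (transpose A *v w) \<bullet> z"
  by (metis dot_lmul_matrix transpose_matrix_vector)

lemma inner_matrix_vector_symmetric:
  "transpose M = M \<Longrightarrow> (y::real^'n::finite) \<bullet> (M *v z) = z \<bullet> (M *v y)"
  by (metis inner_matrix_vector_transpose inner_commute)

section \<open>Singular values\<close>

lemma bdd_above_norm_matrix_vector_sphere:
  "bdd_above {norm ((M::real^'n::finite^'m::finite) *v v) | v. norm v = 1}"
proof -
  obtain K where "\<And>v. norm (M *v v) \<le> norm v * K"
    using bounded_linear.bounded[OF matrix_vector_mul_bounded_linear[of M]] by blast
  then show ?thesis
    by (intro bdd_aboveI[of _ K]) (auto, metis mult_1)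
qed

lemma norm_matrix_vector_le_sigma_max: "norm ((M::real^'n::finite^'n) *v v) \<le> sigma_max M * norm v"
proof (cases "v = 0")
  case True
  then show ?thesis by simp
next
  case False
  let ?u = "(1 / norm v) *\<^sub>R v"
  have "norm (M *v ?u) \<le> sigma_max M"
    unfolding sigma_max_def
    by (rule cSup_upper) (use False bdd_above_norm_matrix_vector_sphere in auto)
  moreover have "M *v ?u = (1 / norm v) *\<^sub>R (M *v v)"
    by (simp add: matrix_vector_mult_scaleR)
  ultimately show ?thesis
    using False by (simp add: divide_le_eq mult.commute)
qed

lemma sigma_max_nonneg: "0 \<le> sigma_max (M::real^'n::finite^'n)"
  using norm_matrix_vector_le_sigma_max[of M "axis undefined 1"]
  by (simp add: order.trans[OF norm_ge_zero])

lemma sigma_min_le_norm_matrix_vector: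
  "norm v = 1 \<Longrightarrow> sigma_min (M::real^'n::finite^'n) \<le> norm (M *v v)"
  unfolding sigma_min_def by (rule cInf_lower) (auto intro: bdd_belowI[of _ 0])

lemma norm_transpose_vector_le_sigma_max:
  "norm (transpose (M::real^'n::finite^'n) *v v) \<le> sigma_max M * norm v"
proof -
  let ?w = "transpose M *v v"
  have "norm ?w^2 = v \<bullet> (M *v ?w)"
    by (simp add: power2_norm_eq_inner inner_matrix_vector_transpose[of v])
  also have "\<dots> \<le> norm v * (sigma_max M * norm ?w)"
    by (rule order_trans[OF norm_cauchy_schwarz])
       (simp add: mult_left_mono norm_matrix_vector_le_sigma_max)
  finally have "norm ?w * norm ?w \<le> (sigma_max M * norm v) * norm ?w"
    by (simp add: power2_eq_square mult_ac)
  then show ?thesis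
    using mult_right_le_imp_le[of "norm ?w" "norm ?w" "sigma_max M * norm v"] sigma_max_nonneg[of M]
    by (cases "?w = 0") auto
qed

lemma norm_kron_mat1_left_le:
  fixes y :: "real^('p::finite \<times> 'n::finite)"
  assumes "\<And>v. norm (A *v v) \<le> c * norm v" "0 \<le> c"
  shows "norm (kron A (mat 1) *v y) \<le> c * norm y"
proof -
  have "norm (kron A (mat 1) *v y)^2 = (\<Sum>k\<in>UNIV. norm (A *v slice y k)^2)"
    by (simp add: norm_power2_eq_sum_slice slice_kron_mat1)
  also have "\<dots> \<le> (\<Sum>k\<in>UNIV. (c * norm (slice y k))^2)"
    by (intro sum_mono power_mono assms) simp
  also have "\<dots> = (c * norm y)^2"
    by (simp add: power_mult_distrib norm_power2_eq_sum_slice[of y] sum_distrib_left)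
  finally show ?thesis
    by (rule power2_le_imp_le) (simp add: assms)
qed

lemma norm_kron_mat1_right_le:
  fixes y :: "real^('p::finite \<times> 'n::finite)"
  assumes "\<And>v. norm (B *v v) \<le> c * norm v" "0 \<le> c"
  shows "norm (kron (mat 1) B *v y) \<le> c * norm y"
proof -
  have "norm (kron (mat 1) B *v y)^2 = (\<Sum>i\<in>UNIV. norm (B *v block y i)^2)"
    by (simp add: norm_power2_eq_sum_block block_kron_mat1)
  also have "\<dots> \<le> (\<Sum>i\<in>UNIV. (c * norm (block y i))^2)"
    by (intro sum_mono power_mono assms) simp
  also have "\<dots> = (c * norm y)^2"
    by (simp add: power_mult_distrib norm_power2_eq_sum_block[of y] sum_distrib_left)
  finally show ?thesis
    by (rule power2_le_imp_le) (simp add: assms)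
qed

lemma quadratic_form_kron_mat1_le:
  fixes y :: "real^('p::finite \<times> 'n::finite)"
  shows "y \<bullet> (kron W (mat 1) *v y) \<le> sigma_max W * norm y^2"
proof -
  have "y \<bullet> (kron W (mat 1) *v y) \<le> norm y * norm (kron W (mat 1) *v y)"
    by (rule norm_cauchy_schwarz)
  also have "\<dots> \<le> norm y * (sigma_max W * norm y)"
    by (intro mult_left_mono norm_kron_mat1_left_le norm_matrix_vector_le_sigma_max sigma_max_nonneg)
       simp
  finally show ?thesis
    by (simp add: power2_eq_square mult_ac)
qed

lemma
  assumes "Q \<in> Qbar"
  shows Qbar_symmetric: "transpose Q = Q"
    and Qbar_psd: "0 \<le> v \<bullet> (Q *v v)"
    and Qbar_norm_le: "norm (Q *v v) \<le> norm v"
proof -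
  show "transpose Q = Q" "0 \<le> v \<bullet> (Q *v v)"
    using assms by (auto simp: Qbar_def)
  have "sigma_max Q \<le> 1"
    using assms by (auto simp: Qbar_def)
  then show "norm (Q *v v) \<le> norm v"
    by (metis norm_matrix_vector_le_sigma_max mult_left_le_one_le norm_ge_zero order_trans
        sigma_max_nonneg)
qed

lemma Qbar_entry_bound:
  assumes "Q \<in> Qbar"
  shows "\<bar>Q$k$m\<bar> \<le> 1"
proof -
  have "\<bar>(Q *v axis m 1)$k\<bar> \<le> norm (Q *v axis m 1)"
    by (rule component_le_norm_cart)
  also have "\<dots> \<le> 1"
    using Qbar_norm_le[OF assms, of "axis m 1"] by simp
  finally show ?thesis
    by (simp add: matrix_vector_mult_basis column_def)
qed

section \<open>The quadratic form of \<open>I \<otimes> M\<close>\<close>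

definition kron_form :: "real^'n::finite^'n \<Rightarrow> real^('p::finite \<times> 'n) \<Rightarrow> real^('p \<times> 'n) \<Rightarrow> real" where
  "kron_form M u v = u \<bullet> (kron (mat 1) M *v v)"

lemma kron_form_eq_sum_block: "kron_form M u v = (\<Sum>i\<in>UNIV. block u i \<bullet> (M *v block v i))"
  by (simp add: kron_form_def inner_eq_sum_block[of u] block_kron_mat1)

lemma kron_form_eq_sum_entries:
  "kron_form M u v = (\<Sum>i\<in>UNIV. \<Sum>k\<in>UNIV. \<Sum>m\<in>UNIV. (u$(i,k) * v$(i,m)) * M$k$m)"
  by (simp add: kron_form_eq_sum_block inner_vec_def matrix_vector_mult_def block_def
      sum_distrib_left mult_ac)

lemma kron_form_commute: "transpose M = M \<Longrightarrow> kron_form M u v = kron_form M v u"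
  unfolding kron_form_eq_sum_block by (rule sum.cong) (auto intro: inner_matrix_vector_symmetric)

lemma kron_form_add_left: "kron_form M (u + v) w = kron_form M u w + kron_form M v w"
  by (simp add: kron_form_def inner_add_left)

lemma kron_form_add_right: "kron_form M u (v + w) = kron_form M u v + kron_form M u w"
  by (simp add: kron_form_def inner_add_right matrix_vector_right_distrib)

lemma kron_form_diff_left: "kron_form M (u - v) w = kron_form M u w - kron_form M v w"
  by (simp add: kron_form_def inner_diff_left)

lemma kron_form_diff_right: "kron_form M u (v - w) = kron_form M u v - kron_form M u w"
  by (simp add: kron_form_def inner_diff_right matrix_vector_mult_diff_distrib)

lemma kron_form_scaleR_left: "kron_form M (a *\<^sub>R u) v = a * kron_form M u v"
  by (simp add: kron_form_def)

lemma kron_form_scaleR_right: "kron_form M u (a *\<^sub>R v) = a * kron_form M u v"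
  by (simp add: kron_form_def matrix_vector_mult_scaleR)

lemma kron_form_nonneg: "(\<And>v. 0 \<le> v \<bullet> (M *v v)) \<Longrightarrow> 0 \<le> kron_form M u u"
  unfolding kron_form_eq_sum_block by (intro sum_nonneg) auto

lemma kron_form_le_norm_power2: "(\<And>v. norm (M *v v) \<le> norm v) \<Longrightarrow> kron_form M u u \<le> norm u^2"
  using norm_cauchy_schwarz[of u "kron (mat 1) M *v u"] norm_kron_mat1_right_le[of M 1 u]
  by (simp add: kron_form_def power2_eq_square mult_left_mono order_trans)

lemma kron_form_ge:
  "(\<And>v. c * norm v^2 \<le> v \<bullet> (M *v v)) \<Longrightarrow> c * norm u^2 \<le> kron_form M u u"
  unfolding kron_form_eq_sum_block norm_power2_eq_sum_block[of u] sum_distrib_left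
  by (intro sum_mono) auto

lemma kron_form_twice_le:
  assumes "M \<in> Qbar" "0 < m"
  shows "2 * kron_form M u v \<le> m * kron_form M u u + kron_form M v v / m"
proof -
  have "0 \<le> kron_form M (m *\<^sub>R u - v) (m *\<^sub>R u - v)"
    by (rule kron_form_nonneg) (rule Qbar_psd[OF assms(1)])
  also have "\<dots> = m * m * kron_form M u u - 2 * m * kron_form M u v + kron_form M v v"
    by (simp add: kron_form_diff_left kron_form_diff_right kron_form_scaleR_left kron_form_scaleR_right
        kron_form_commute[OF Qbar_symmetric[OF assms(1)], of v u] algebra_simps)
  finally have "2 * m * kron_form M u v \<le> m * (m * kron_form M u u + kron_form M v v / m)"
    using assms(2) by (simp add: algebra_simps)
  then show ?thesis
    using assms(2) by (simp add: mult.assoc)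
qed

lemma kron_form_add_le:
  assumes "M \<in> Qbar" "0 < l"
  shows "kron_form M (u + d) (u + d) \<le> (1 + l) * kron_form M u u + (1 + 1 / l) * norm d^2"
proof -
  have "kron_form M (u + d) (u + d) = kron_form M u u + 2 * kron_form M u d + kron_form M d d"
    by (simp add: kron_form_add_left kron_form_add_right
        kron_form_commute[OF Qbar_symmetric[OF assms(1)], of d u])
  also have "\<dots> \<le> (1 + l) * kron_form M u u + (1 + 1 / l) * kron_form M d d"
    using kron_form_twice_le[OF assms, of u d] by (simp add: algebra_simps)
  also have "\<dots> \<le> (1 + l) * kron_form M u u + (1 + 1 / l) * norm d^2"
    using assms(2) kron_form_le_norm_power2[OF Qbar_norm_le[OF assms(1)], of d]
    by (intro add_left_mono mult_left_mono) auto
  finally show ?thesis .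
qed

lemma inner_kron_twice_le:
  assumes "M \<in> Qbar" "0 < m"
  shows "2 * (w \<bullet> (kron G M *v y)) \<le> m * (sigma_max G * norm w)^2 + kron_form M y y / m"
proof -
  define w' where "w' = kron (transpose G) (mat 1) *v w"
  have "w \<bullet> (kron G M *v y) = w \<bullet> (kron G (mat 1) *v (kron (mat 1) M *v y))"
    by (simp add: matrix_vector_mul_assoc kron_matrix_mult)
  also have "\<dots> = kron_form M w' y"
    by (simp add: kron_form_def w'_def inner_matrix_vector_transpose[of w] transpose_kron)
  finally have "2 * (w \<bullet> (kron G M *v y)) \<le> m * kron_form M w' w' + kron_form M y y / m"
    using kron_form_twice_le[OF assms] by simp
  moreover have "kron_form M w' w' \<le> (sigma_max G * norm w)^2"
  proof -
    have "norm w' \<le> sigma_max G * norm w"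
      unfolding w'_def
      by (intro norm_kron_mat1_left_le norm_transpose_vector_le_sigma_max sigma_max_nonneg)
    then show ?thesis
      using kron_form_le_norm_power2[OF Qbar_norm_le[OF assms(1)], of w'] norm_ge_zero[of w']
      by (meson order_trans power_mono)
  qed
  ultimately show ?thesis
    using assms(2) mult_left_mono[of "kron_form M w' w'" "(sigma_max G * norm w)^2" m] by linarith
qed

lemma nonneg_quadratic_imp_linear_coeff_eq_0:
  fixes a b :: real
  assumes "\<And>t. 0 \<le> b * t + a * t^2"
  shows "b = 0"
proof (rule ccontr)
  assume "b \<noteq> 0"
  define k where "k = \<bar>a\<bar> + 1"
  have k: "0 < k" "a - k < 0"
    by (auto simp: k_def)
  have "b * (- b / k) + a * (- b / k)^2 = b^2 * (a - k) / k^2"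
    using k by (simp add: field_simps power2_eq_square)
  also have "\<dots> < 0"
    using \<open>b \<noteq> 0\<close> k by (simp add: divide_neg_pos mult_pos_neg)
  finally show False
    using assms[of "- b / k"] by linarith
qed

lemma eigenvector_of_quadratic_form_minimiser:
  fixes M :: "real^'n::finite^'n"
  assumes sym: "transpose M = M" and min: "\<And>y. c * norm y^2 \<le> y \<bullet> (M *v y)"
    and v: "v \<bullet> v = 1" "v \<bullet> (M *v v) = c"
  shows "M *v v = c *\<^sub>R v"
proof -
  define z where "z = M *v v - c *\<^sub>R v"
  define q where "q y = y \<bullet> (M *v y) - c * (y \<bullet> y)" for y
  have "z \<bullet> v = 0"
    using v by (simp add: z_def inner_diff_left inner_commute[of "M *v v"])
  then have zMv: "z \<bullet> (M *v v) = z \<bullet> z"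
    by (simp add: z_def inner_diff_right)
  \<comment> \<open>\<open>q\<close> is a nonnegative quadratic form vanishing at \<open>v\<close>, so its polarisation with \<open>v\<close> vanishes.\<close>
  have "q (v + t *\<^sub>R z) = 2 * (z \<bullet> z) * t + q z * t^2" for t
  proof -
    have "(v + t *\<^sub>R z) \<bullet> (M *v (v + t *\<^sub>R z))
        = v \<bullet> (M *v v) + 2 * t * (z \<bullet> (M *v v)) + t^2 * (z \<bullet> (M *v z))"
      by (simp add: matrix_vector_right_distrib matrix_vector_mult_scaleR inner_add_left inner_add_right
          inner_matrix_vector_symmetric[OF sym, of v z] power2_eq_square algebra_simps)
    moreover have "(v + t *\<^sub>R z) \<bullet> (v + t *\<^sub>R z) = v \<bullet> v + t^2 * (z \<bullet> z)"
      using \<open>z \<bullet> v = 0\<close>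
      by (simp add: inner_add_left inner_add_right inner_commute[of v z] power2_eq_square)
    ultimately show ?thesis
      using v zMv by (simp add: q_def algebra_simps)
  qed
  moreover have "0 \<le> q y" for y
    using min[of y] by (simp add: q_def power2_norm_eq_inner)
  ultimately have "2 * (z \<bullet> z) = 0"
    by (intro nonneg_quadratic_imp_linear_coeff_eq_0[of _ "q z"]) metis
  then show ?thesis
    by (simp add: z_def)
qed

lemma sigma_min_le_quadratic_form:
  fixes M :: "real^'n::finite^'n"
  assumes sym: "transpose M = M" and psd: "\<And>v. 0 \<le> v \<bullet> (M *v v)"
  shows "sigma_min M * norm v^2 \<le> v \<bullet> (M *v v)"
proof -
  have "continuous_on (sphere 0 1) (\<lambda>v. v \<bullet> (M *v v))"
    by (intro continuous_intros linear_continuous_on matrix_vector_mul_bounded_linear)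
  moreover have "sphere (0::real^'n) 1 \<noteq> {}"
    using mem_sphere_0[of "axis undefined 1 :: real^'n" 1] by auto
  ultimately obtain v0 where "v0 \<in> sphere 0 1"
    and "\<forall>y\<in>sphere 0 1. v0 \<bullet> (M *v v0) \<le> y \<bullet> (M *v y)"
    using continuous_attains_inf[OF compact_sphere] by blast
  then have v0: "norm v0 = 1" and v0_min: "\<And>y. norm y = 1 \<Longrightarrow> v0 \<bullet> (M *v v0) \<le> y \<bullet> (M *v y)"
    by auto
  define c where "c = v0 \<bullet> (M *v v0)"
  have c_min: "c * norm y^2 \<le> y \<bullet> (M *v y)" for y
  proof (cases "y = 0")
    case False
    have "c \<le> ((1 / norm y) *\<^sub>R y) \<bullet> (M *v ((1 / norm y) *\<^sub>R y))"
      unfolding c_def using False by (intro v0_min) simp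
    also have "\<dots> = (y \<bullet> (M *v y)) / norm y^2"
      by (simp add: matrix_vector_mult_scaleR power2_eq_square)
    finally show ?thesis
      using False by (simp add: le_divide_eq)
  qed simp
  have "M *v v0 = c *\<^sub>R v0"
    using v0 by (intro eigenvector_of_quadratic_form_minimiser[OF sym c_min])
      (simp_all add: c_def power2_norm_eq_inner[symmetric])
  moreover have "0 \<le> c"
    using psd[of v0] by (simp add: c_def)
  ultimately have "norm (M *v v0) = c"
    using v0 by simp
  then have "sigma_min M \<le> c"
    using sigma_min_le_norm_matrix_vector[OF v0, of M] by simp
  then show ?thesis
    using c_min[of v] mult_right_mono[of "sigma_min M" c "norm v^2"] by simp
qed

section \<open>Integration\<close>

lemma quadratic_increment_imp_constant:
  fixes D :: "real \<Rightarrow> real"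
  assumes "a \<le> b" and incr: "\<And>x y. x \<in> {a..b} \<Longrightarrow> y \<in> {a..b} \<Longrightarrow> \<bar>D x - D y\<bar> \<le> C * (x - y)^2"
  shows "D b = D a"
proof (cases "a = b")
  case False
  then have "a < b"
    using \<open>a \<le> b\<close> by simp
  have quad: "\<bar>D x - D y\<bar> \<le> \<bar>C\<bar> * \<bar>x - y\<bar> * \<bar>x - y\<bar>" if "x \<in> {a..b}" "y \<in> {a..b}" for x y
  proof -
    have "\<bar>D x - D y\<bar> \<le> \<bar>C\<bar> * (x - y)^2"
      using incr[OF that] by (meson abs_ge_self mult_right_mono zero_le_power2 order_trans)
    then show ?thesis
      by (simp add: power2_eq_square abs_mult_self_eq mult.assoc)
  qed
  have "\<bar>D x - D y\<bar> \<le> (\<bar>C\<bar> * (b - a)) * \<bar>x - y\<bar>" if "x \<in> {a..b}" "y \<in> {a..b}" for x y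
    using quad[OF that] that
    by (smt (verit, best) abs_ge_zero atLeastAtMost_iff mult_left_mono mult_right_mono)
  then have "(\<bar>C\<bar> * (b - a))-lipschitz_on {a..b} D"
    by (intro lipschitz_onI) (use \<open>a \<le> b\<close> in \<open>auto simp: dist_real_def\<close>)
  then have "continuous_on {a..b} D"
    by (rule lipschitz_on_continuous_on)
  then show ?thesis
  proof (rule DERIV_isconst_end[OF \<open>a < b\<close>])
    fix x assume x: "a < x" "x < b"
    show "DERIV D x :> 0"
      unfolding has_field_derivative_iff
    proof (rule Lim_null_comparison)
      show "\<forall>\<^sub>F y in at x. norm ((D y - D x) / (y - x)) \<le> \<bar>C\<bar> * \<bar>y - x\<bar>"
        unfolding eventually_at
      proof (intro exI[of _ "min (x - a) (b - x)"] conjI ballI impI allI)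
        fix y assume y: "y \<noteq> x \<and> dist y x < min (x - a) (b - x)"
        then have "\<bar>D y - D x\<bar> \<le> \<bar>C\<bar> * \<bar>y - x\<bar> * \<bar>y - x\<bar>"
          using x by (intro quad) (auto simp: dist_real_def)
        then show "norm ((D y - D x) / (y - x)) \<le> \<bar>C\<bar> * \<bar>y - x\<bar>"
          using y by (simp add: divide_le_eq abs_divide)
      qed (use x in simp)
      show "((\<lambda>y. \<bar>C\<bar> * \<bar>y - x\<bar>) \<longlongrightarrow> 0) (at x)"
        by (rule tendsto_eq_intros refl | simp)+
    qed
  qed
qed simp

text \<open>The solution is only known in integral form, so the energy identity cannot be obtained by
  differentiating pointwise; this version of the fundamental theorem of calculus needs only a
  second-order remainder estimate.\<close>
lemma integral_eq_of_quadratic_remainder: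
  fixes F h :: "real \<Rightarrow> real"
  assumes "a \<le> b" and h: "h integrable_on {a..b}"
    and remainder: "\<And>s t. a \<le> s \<Longrightarrow> s \<le> t \<Longrightarrow> t \<le> b \<Longrightarrow>
      \<bar>F t - F s - integral {s..t} h\<bar> \<le> C * (t - s)^2"
  shows "F b - F a = integral {a..b} h"
proof -
  define D where "D t = F t - integral {a..t} h" for t
  have D_diff: "D t - D s = F t - F s - integral {s..t} h" if "a \<le> s" "s \<le> t" "t \<le> b" for s t
  proof -
    have "integral {a..s} h + integral {s..t} h = integral {a..t} h"
      using that integrable_on_subinterval[OF h, of a t]
      by (intro Henstock_Kurzweil_Integration.integral_combine) auto
    then show ?thesis
      by (simp add: D_def)
  qed
  have "\<bar>D x - D y\<bar> \<le> C * (x - y)^2" if "x \<in> {a..b}" "y \<in> {a..b}" for x y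
  proof (cases "y \<le> x")
    case True
    then show ?thesis
      using that D_diff[of y x] remainder[of y x] by simp
  next
    case False
    then show ?thesis
      using that D_diff[of x y] remainder[of x y] by (simp add: abs_minus_commute power2_commute)
  qed
  then have "D b = D a"
    by (rule quadratic_increment_imp_constant[OF \<open>a \<le> b\<close>])
  then show ?thesis
    by (simp add: D_def)
qed

lemma riemann_integrable_on_imp_integrable_on:
  assumes "riemann_integrable_on f a b"
  shows "f integrable_on {a..b}"
proof -
  obtain I where I: "\<forall>e>0. \<exists>d>0. \<forall>D. D tagged_division_of {a..b} \<and> (\<lambda>x. ball x d) fine D \<longrightarrow>
      norm ((\<Sum>(x,K)\<in>D. Henstock_Kurzweil_Integration.content K *\<^sub>R f x) - I) < e"
    using assms unfolding riemann_integrable_on_def by blast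
  have "(f has_integral I) {a..b}"
    unfolding has_integral_real
  proof (intro allI impI)
    fix e :: real assume "0 < e"
    with I obtain d where "d > 0" "\<forall>D. D tagged_division_of {a..b} \<and> (\<lambda>x. ball x d) fine D \<longrightarrow>
        norm ((\<Sum>(x,K)\<in>D. Henstock_Kurzweil_Integration.content K *\<^sub>R f x) - I) < e"
      by blast
    then show "\<exists>\<gamma>. gauge \<gamma> \<and> (\<forall>\<D>. \<D> tagged_division_of {a..b} \<and> \<gamma> fine \<D> \<longrightarrow>
        norm ((\<Sum>(x,K)\<in>\<D>. Henstock_Kurzweil_Integration.content K *\<^sub>R f x) - I) < e)"
      by (intro exI[of _ "\<lambda>x. ball x d"]) auto
  qed
  then show ?thesis
    by blast
qed

lemma integrable_continuous_mult_bounded: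
  fixes f g :: "real \<Rightarrow> real"
  assumes f: "continuous_on {a..b} f" and g: "g integrable_on {a..b}"
    and g_bound: "\<And>t. t \<in> {a..b} \<Longrightarrow> \<bar>g t\<bar> \<le> B"
  shows "(\<lambda>t. f t * g t) integrable_on {a..b}"
proof -
  have "g absolutely_integrable_on {a..b}"
    by (rule absolutely_integrable_integrable_bound[where g = "\<lambda>_. B"]) (use g_bound g in auto)
  moreover have "f \<in> borel_measurable (lebesgue_on {a..b})"
    by (rule continuous_imp_measurable_on_sets_lebesgue[OF f]) auto
  moreover have "bounded (f ` {a..b})"
    by (rule compact_imp_bounded[OF compact_continuous_image[OF f compact_Icc]])
  ultimately have "(\<lambda>t. f t * g t) absolutely_integrable_on {a..b}"
    by (intro absolutely_integrable_bounded_measurable_product_real) auto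
  then show ?thesis
    using absolutely_integrable_on_def by blast
qed

lemma norm_integral_le_bound:
  fixes f :: "real \<Rightarrow> 'a::euclidean_space"
  assumes "f integrable_on {a..b}" "a \<le> b" "0 \<le> B" "\<And>t. t \<in> {a..b} \<Longrightarrow> norm (f t) \<le> B"
  shows "norm (integral {a..b} f) \<le> B * (b - a)"
  using integrable_bound[OF assms(3), of f a b] assms by (simp add: cbox_interval content_real)

lemma bounded_linear_inner_matrix_vector: "bounded_linear (\<lambda>N::real^'n::finite^'m::finite. u \<bullet> (N *v v))"
  unfolding linear_conv_bounded_linear[symmetric]
  by (rule linearI)
     (simp_all add: matrix_vector_mult_add_rdistrib inner_add_right scaleR_matrix_vector_assoc[symmetric])

lemma bounded_linear_matrix_vector_left: "bounded_linear (\<lambda>N::real^'n::finite^'m::finite. N *v v)"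
  unfolding linear_conv_bounded_linear[symmetric]
  by (rule linearI) (simp_all add: matrix_vector_mult_add_rdistrib scaleR_matrix_vector_assoc[symmetric])

lemma bounded_linear_kron_form: "bounded_linear (\<lambda>M. kron_form M u v)"
  unfolding kron_form_eq_sum_block
  by (intro bounded_linear_sum bounded_linear_inner_matrix_vector)

lemma integral_kron_form:
  "Q integrable_on S \<Longrightarrow> integral S (\<lambda>t. kron_form (Q t) u v) = kron_form (integral S Q) u v"
  using integral_linear[OF _ bounded_linear_kron_form] by (simp add: o_def)

lemma integrable_on_entry:
  "(Q::real \<Rightarrow> real^'n::finite^'m::finite) integrable_on S \<Longrightarrow> (\<lambda>t. Q t $ i $ j) integrable_on S"
  using integrable_linear[OF integrable_linear[OF _ bounded_linear_vec_nth] bounded_linear_vec_nth]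
  by (simp add: o_def)

lemma integral_entry:
  assumes "(Q::real \<Rightarrow> real^'n::finite^'m::finite) integrable_on S"
  shows "integral S (\<lambda>t. Q t $ i $ j) = integral S Q $ i $ j"
proof -
  have "integral S (\<lambda>t. Q t $ i) = integral S Q $ i"
    using integral_linear[OF assms bounded_linear_vec_nth] by (simp add: o_def)
  then show ?thesis
    using integral_linear[OF integrable_linear[OF assms bounded_linear_vec_nth] bounded_linear_vec_nth]
    by (simp add: o_def)
qed

lemma integral_transpose_eq:
  fixes Q :: "real \<Rightarrow> real^'n::finite^'n"
  assumes "Q integrable_on S" "\<And>t. t \<in> S \<Longrightarrow> transpose (Q t) = Q t"
  shows "transpose (integral S Q) = integral S Q"
proof -
  have "integral S (\<lambda>t. Q t $ j $ i) = integral S (\<lambda>t. Q t $ i $ j)" for i j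
    using arg_cong[OF assms(2), of _ "\<lambda>M. M $ i $ j"] by (intro integral_cong) (simp add: transpose_def)
  then show ?thesis
    by (simp add: vec_eq_iff transpose_def integral_entry[OF assms(1)])
qed

lemma integrable_kron_form:
  fixes Q :: "real \<Rightarrow> real^'n::finite^'n" and y z :: "real \<Rightarrow> real^('p::finite \<times> 'n)"
  assumes "continuous_on {a..b} y" "continuous_on {a..b} z" "Q integrable_on {a..b}"
    and "\<And>t. t \<in> {a..b} \<Longrightarrow> Q t \<in> Qbar"
  shows "(\<lambda>t. kron_form (Q t) (y t) (z t)) integrable_on {a..b}"
  unfolding kron_form_eq_sum_entries
  by (intro integrable_sum integrable_continuous_mult_bounded[where B = 1] continuous_intros
      integrable_on_entry Qbar_entry_bound assms) auto

lemma excitation_lower_bound: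
  fixes Q :: "real \<Rightarrow> real^'n::finite^'n"
  assumes Q: "Q integrable_on {a..b}" "\<And>t. t \<in> {a..b} \<Longrightarrow> Q t \<in> Qbar"
  shows "sigma_min (integral {a..b} Q) * norm u^2 \<le> integral {a..b} (\<lambda>t. kron_form (Q t) u u)"
proof -
  have "0 \<le> v \<bullet> (integral {a..b} Q *v v)" for v
  proof -
    have "v \<bullet> (integral {a..b} Q *v v) = integral {a..b} (\<lambda>t. v \<bullet> (Q t *v v))"
      using integral_linear[OF Q(1) bounded_linear_inner_matrix_vector] by (simp add: o_def)
    also have "\<dots> \<ge> 0"
      using integrable_linear[OF Q(1) bounded_linear_inner_matrix_vector]
      by (intro integral_nonneg) (auto simp: o_def Qbar_psd Q(2))
    finally show ?thesis .
  qed
  then have "sigma_min (integral {a..b} Q) * norm u^2 \<le> kron_form (integral {a..b} Q) u u"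
    using Q by (intro kron_form_ge sigma_min_le_quadratic_form integral_transpose_eq Qbar_symmetric)
  then show ?thesis
    by (simp add: integral_kron_form[OF Q(1)])
qed

lemma sigma_min_integral_le_length:
  fixes Q :: "real \<Rightarrow> real^'n::finite^'n"
  assumes "Q integrable_on {a..b}" "\<And>t. t \<in> {a..b} \<Longrightarrow> Q t \<in> Qbar" "a \<le> b"
  shows "sigma_min (integral {a..b} Q) \<le> b - a"
proof -
  define v :: "real^'n" where "v = axis undefined 1"
  have "sigma_min (integral {a..b} Q) \<le> norm (integral {a..b} Q *v v)"
    by (rule sigma_min_le_norm_matrix_vector) (simp add: v_def)
  also have "\<dots> = norm (integral {a..b} (\<lambda>t. Q t *v v))"
    using integral_linear[OF assms(1) bounded_linear_matrix_vector_left] by (simp add: o_def)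
  also have "\<dots> \<le> 1 * (b - a)"
    using assms integrable_linear[OF assms(1) bounded_linear_matrix_vector_left]
    by (intro norm_integral_le_bound) (auto simp: o_def v_def intro: order_trans[OF Qbar_norm_le])
  finally show ?thesis
    by simp
qed

section \<open>Consensus and the Lyapunov equation\<close>

definition weighted_average :: "real^'p::finite \<Rightarrow> real^('p \<times> 'n::finite) \<Rightarrow> real^'n" where
  "weighted_average r y = (\<Sum>i\<in>UNIV. r$i *\<^sub>R block y i)"

lemma bounded_linear_weighted_average: "bounded_linear (weighted_average r)"
  unfolding linear_conv_bounded_linear[symmetric]
  by (rule linearI)
     (simp_all add: weighted_average_def block_add block_scaleR scaleR_add_right sum.distrib
        scaleR_sum_right mult.commute)

lemma weighted_average_diff: "weighted_average r (y - z) = weighted_average r y - weighted_average r z"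
  using linear_diff[OF bounded_linear.linear[OF bounded_linear_weighted_average]] .

lemma weighted_average_kron_eq_0:
  assumes "r v* G = 0"
  shows "weighted_average r (kron G M *v y) = 0"
proof -
  have "(\<Sum>i\<in>UNIV. r$i * G$i$j) = 0" for j
    using arg_cong[OF assms, of "\<lambda>v. v $ j"] by (simp add: vector_matrix_mult_def mult.commute)
  then have "(\<Sum>j\<in>UNIV. \<Sum>i\<in>UNIV. (r$i * G$i$j) *\<^sub>R (M *v block y j)) = 0"
    by (simp add: scaleR_sum_left[symmetric])
  then show ?thesis
    by (subst (asm) sum.swap) (simp add: weighted_average_def block_kron scaleR_sum_right)
qed

lemma weighted_average_consensus:
  assumes "r \<bullet> 1 = 1"
  shows "weighted_average r (kron (ones_r r) (mat 1) *v y) = weighted_average r y"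
proof -
  have "block (kron (ones_r r) (mat 1) *v y) i = weighted_average r y" for i
    by (simp add: block_kron ones_r_def weighted_average_def)
  moreover have "(\<Sum>i\<in>UNIV. r$i) = 1"
    using assms by (simp add: inner_vec_def)
  ultimately show ?thesis
    by (simp add: weighted_average_def scaleR_sum_left[symmetric])
qed

lemma ct_interconnection_row_sum:
  assumes "ct_interconnection G"
  shows "(\<Sum>j\<in>UNIV. G$i$j) = 0"
  using assms sum.remove[of UNIV i "\<lambda>j. G$i$j"] by (simp add: ct_interconnection_def)

lemma kron_consensus_eq_0:
  assumes "ct_interconnection G"
  shows "kron G N *v (kron (ones_r r) (mat 1) *v y) = 0"
proof -
  have "G ** ones_r r = 0"
    using ct_interconnection_row_sum[OF assms]
    by (simp add: vec_eq_iff matrix_matrix_mult_def ones_r_def sum_distrib_right[symmetric])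
  moreover have "kron G N *v (kron (ones_r r) (mat 1) *v y) = kron (G ** ones_r r) (N ** mat 1) *v y"
    by (simp add: matrix_vector_mul_assoc kron_matrix_mult)
  ultimately show ?thesis
    by (simp add: kron_def vec_eq_iff matrix_vector_mult_def)
qed

lemma kron_add_left: "kron (A + B) M = kron A M + kron B M"
  by (simp add: vec_eq_iff kron_def distrib_right)

lemma kron_uminus_left_mult: "kron (- A) M *v y = - (kron A M *v y)"
  by (simp add: vec_eq_iff kron_def matrix_vector_mult_def sum_negf)

lemma kron_ones_r_eq_0:
  assumes "weighted_average r y = 0"
  shows "kron (ones_r r) M *v y = 0"
proof -
  have "block (kron (ones_r r) M *v y) i = M *v weighted_average r y" for i
    by (simp add: block_kron ones_r_def weighted_average_def matrix_vector_mult_scaleR[symmetric]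
        vec.sum)
  then show ?thesis
    using assms by (simp add: vec_eq_iff block_def)
qed

lemma lyapunov_kron_identity:
  fixes G W :: "real^'p::finite^'p" and M :: "real^'n::finite^'n" and y :: "real^('p \<times> 'n)"
  assumes W_sym: "transpose W = W"
    and lyapunov: "transpose (G - ones_r r) ** W + W ** (G - ones_r r) = - mat 1"
    and M_sym: "transpose M = M" and average: "weighted_average r y = 0"
  shows "2 * (y \<bullet> (kron W (mat 1) *v (kron G M *v y))) = - kron_form M y y"
proof -
  define A where "A = G - ones_r r"
  have "kron G M = kron A M + kron (ones_r r) M"
    by (simp add: A_def flip: kron_add_left)
  then have "kron G M *v y = kron A M *v y"
    using kron_ones_r_eq_0[OF average, of M] by (simp add: matrix_vector_mult_add_rdistrib)
  then have "y \<bullet> (kron W (mat 1) *v (kron G M *v y)) = y \<bullet> (kron (W ** A) M *v y)"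
    by (simp add: matrix_vector_mul_assoc kron_matrix_mult)
  moreover have "y \<bullet> (kron (W ** A) M *v y) = y \<bullet> (kron (transpose A ** W) M *v y)"
    \<comment> \<open>a quadratic form only sees the symmetric part of its matrix\<close>
    using inner_matrix_vector_transpose[of y "kron (W ** A) M" y]
    by (simp add: transpose_kron matrix_transpose_mul W_sym M_sym inner_commute)
  ultimately have "2 * (y \<bullet> (kron W (mat 1) *v (kron G M *v y)))
      = y \<bullet> (kron (transpose A ** W + W ** A) M *v y)"
    by (simp add: kron_add_left matrix_vector_mult_add_rdistrib inner_add_right)
  also have "\<dots> = - kron_form M y y"
    using lyapunov by (simp add: A_def kron_uminus_left_mult kron_form_def)
  finally show ?thesis .
qed

section \<open>Estimates along a trajectory\<close>

lemma abs_inner_matrix_vector_le: "\<bar>a \<bullet> (W *v b)\<bar> \<le> sigma_max W * (norm a * norm (b::real^'m::finite))"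
proof -
  have "\<bar>a \<bullet> (W *v b)\<bar> \<le> norm a * norm (W *v b)"
    by (rule Cauchy_Schwarz_ineq2)
  also have "\<dots> \<le> norm a * (sigma_max W * norm b)"
    by (simp add: mult_left_mono norm_matrix_vector_le_sigma_max)
  finally show ?thesis
    by (simp add: mult_ac)
qed

lemma quadratic_form_remainder:
  fixes W :: "real^'m::finite^'m" and y f :: "real \<Rightarrow> real^'m"
  assumes W_sym: "transpose W = W" and "s \<le> t"
    and f: "f integrable_on {s..t}" and f_bound: "\<And>u. u \<in> {s..t} \<Longrightarrow> norm (f u) \<le> B"
    and y: "\<And>u. u \<in> {s..t} \<Longrightarrow> y u - y s = integral {s..u} f"
    and rate: "(\<lambda>u. 2 * (y u \<bullet> (W *v f u))) integrable_on {s..t}"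
  shows "\<bar>y t \<bullet> (W *v y t) - y s \<bullet> (W *v y s) - integral {s..t} (\<lambda>u. 2 * (y u \<bullet> (W *v f u)))\<bar>
    \<le> 3 * sigma_max W * B^2 * (t - s)^2"
proof -
  define \<sigma> where "\<sigma> = sigma_max W"
  define D where "D = y t - y s"
  have "0 \<le> \<sigma>" "0 \<le> B"
    using sigma_max_nonneg f_bound[of s] \<open>s \<le> t\<close>
    by (auto simp: \<sigma>_def intro: order_trans[OF norm_ge_zero])
  have y_lip: "norm (y u - y s) \<le> B * (t - s)" if "u \<in> {s..t}" for u
  proof -
    have "norm (y u - y s) = norm (integral {s..u} f)"
      using y[OF that] by simp
    also have "\<dots> \<le> B * (u - s)"
      using that f_bound integrable_on_subinterval[OF f, of s u] \<open>0 \<le> B\<close>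
      by (intro norm_integral_le_bound) auto
    also have "\<dots> \<le> B * (t - s)"
      using that \<open>0 \<le> B\<close> by (simp add: mult_left_mono)
    finally show ?thesis .
  qed
  have lin: "bounded_linear (\<lambda>z. 2 * (y s \<bullet> (W *v z)))"
    unfolding linear_conv_bounded_linear[symmetric]
    by (rule linearI)
       (simp_all add: matrix_vector_right_distrib inner_add_right matrix_vector_mult_scaleR)
  define k where "k u = 2 * ((y u - y s) \<bullet> (W *v f u))" for u
  have rate_split: "2 * (y u \<bullet> (W *v f u)) = 2 * (y s \<bullet> (W *v f u)) + k u" for u
    by (simp add: k_def inner_diff_left algebra_simps)
  have main_int: "((\<lambda>u. 2 * (y s \<bullet> (W *v f u))) has_integral 2 * (y s \<bullet> (W *v D))) {s..t}"
    using has_integral_linear[OF integrable_integral[OF f] lin] y[of t] \<open>s \<le> t\<close>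
    by (simp add: o_def D_def)
  then have "k integrable_on {s..t}"
    using integrable_diff[OF rate has_integral_integrable[OF main_int]] by (simp add: rate_split)
  then have "((\<lambda>u. 2 * (y u \<bullet> (W *v f u))) has_integral 2 * (y s \<bullet> (W *v D)) + integral {s..t} k) {s..t}"
    unfolding rate_split by (rule has_integral_add[OF main_int integrable_integral])
  then have int_eq:
    "integral {s..t} (\<lambda>u. 2 * (y u \<bullet> (W *v f u))) = 2 * (y s \<bullet> (W *v D)) + integral {s..t} k"
    by (rule integral_unique)
  have "norm (integral {s..t} k) \<le> (2 * \<sigma> * B^2 * (t - s)) * (t - s)"
  proof (rule norm_integral_le_bound[OF \<open>k integrable_on {s..t}\<close> \<open>s \<le> t\<close>])
    show "0 \<le> 2 * \<sigma> * B^2 * (t - s)"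
      using \<open>0 \<le> \<sigma>\<close> \<open>s \<le> t\<close> by simp
    fix u assume u: "u \<in> {s..t}"
    have "norm (k u) \<le> 2 * (\<sigma> * (norm (y u - y s) * norm (f u)))"
      using abs_inner_matrix_vector_le[of "y u - y s" W "f u"] by (simp add: k_def \<sigma>_def)
    also have "\<dots> \<le> 2 * (\<sigma> * ((B * (t - s)) * B))"
      using y_lip[OF u] f_bound[OF u] \<open>0 \<le> \<sigma>\<close> \<open>0 \<le> B\<close> \<open>s \<le> t\<close>
      by (intro mult_left_mono mult_mono) auto
    finally show "norm (k u) \<le> 2 * \<sigma> * B^2 * (t - s)"
      by (simp add: power2_eq_square mult_ac)
  qed
  moreover have "\<bar>D \<bullet> (W *v D)\<bar> \<le> \<sigma> * B^2 * (t - s)^2"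
  proof -
    have "\<bar>D \<bullet> (W *v D)\<bar> \<le> \<sigma> * (norm D * norm D)"
      using abs_inner_matrix_vector_le[of D W D] by (simp add: \<sigma>_def)
    also have "\<dots> \<le> \<sigma> * ((B * (t - s)) * (B * (t - s)))"
      using y_lip[of t] \<open>0 \<le> \<sigma>\<close> \<open>0 \<le> B\<close> \<open>s \<le> t\<close> unfolding D_def by (intro mult_left_mono mult_mono) auto
    finally show ?thesis
      by (simp add: power2_eq_square mult_ac)
  qed
  moreover have "y t \<bullet> (W *v y t) - y s \<bullet> (W *v y s) = 2 * (y s \<bullet> (W *v D)) + D \<bullet> (W *v D)"
    using inner_matrix_vector_symmetric[OF W_sym, of D "y s"]
    by (simp add: D_def inner_diff_left inner_diff_right matrix_vector_mult_diff_distrib algebra_simps)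
  moreover have "(2 * \<sigma> * B^2 * (t - s)) * (t - s) = 2 * \<sigma> * B^2 * (t - s)^2"
    by (simp add: power2_eq_square)
  ultimately show ?thesis
    unfolding int_eq \<sigma>_def[symmetric] real_norm_def by linarith
qed

locale kron_flow =
  fixes G :: "real^'p::finite^'p" and Q :: "real \<Rightarrow> real^'n::finite^'n"
    and e :: "real \<Rightarrow> real^('p \<times> 'n)" and T :: real
  assumes T_pos: "0 < T"
    and Q_Qbar: "\<And>t. t \<in> {0..T} \<Longrightarrow> Q t \<in> Qbar"
    and Q_integrable: "Q integrable_on {0..T}"
    and solution: "\<And>t. t \<in> {0..T} \<Longrightarrow> ((\<lambda>s. kron G (Q s) *v e s) has_integral (e t - e 0)) {0..t}"
begin

abbreviation velocity :: "real \<Rightarrow> real^('p \<times> 'n)" where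
  "velocity s \<equiv> kron G (Q s) *v e s"

abbreviation dissipation_rate :: "real \<Rightarrow> real" where
  "dissipation_rate s \<equiv> kron_form (Q s) (e s) (e s)"

definition gain :: real where
  "gain = max 1 (sigma_max G)"

definition dissipation :: real where
  "dissipation = integral {0..T} dissipation_rate"

lemma velocity_integrable_on:
  assumes "0 \<le> s" "u \<le> T"
  shows "velocity integrable_on {s..u}"
proof -
  have "velocity integrable_on {0..T}"
    using solution[of T] T_pos by (auto simp: has_integral_integrable)
  then show ?thesis
    by (rule integrable_on_subinterval) (use assms in auto)
qed

lemma increment_eq_integral:
  assumes "0 \<le> s" "s \<le> u" "u \<le> T"
  shows "e u - e s = integral {s..u} velocity"
proof -
  have "integral {0..s} velocity + integral {s..u} velocity = integral {0..u} velocity"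
    using assms velocity_integrable_on[of 0 u]
    by (intro Henstock_Kurzweil_Integration.integral_combine) auto
  moreover have "integral {0..t} velocity = e t - e 0" if "t \<in> {0..T}" for t
    using solution[OF that] by (rule integral_unique)
  then have "integral {0..s} velocity = e s - e 0" "integral {0..u} velocity = e u - e 0"
    using assms by auto
  ultimately show ?thesis
    by (simp add: algebra_simps)
qed

lemma continuous_on_e: "continuous_on {0..T} e"
proof -
  have "continuous_on {0..T} (\<lambda>t. e 0 + integral {0..t} velocity)"
    by (intro continuous_intros indefinite_integral_continuous_1 velocity_integrable_on) simp_all
  moreover have "e 0 + integral {0..t} velocity = e t" if "t \<in> {0..T}" for t
    using increment_eq_integral[of 0 t] that by (simp add: algebra_simps)
  ultimately show ?thesis
    by (rule continuous_on_eq)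
qed

lemma velocity_bounded: obtains B where "0 \<le> B" "\<And>t. t \<in> {0..T} \<Longrightarrow> norm (velocity t) \<le> B"
proof -
  obtain C where "\<forall>t\<in>{0..T}. norm (e t) \<le> C"
    using compact_imp_bounded[OF compact_continuous_image[OF continuous_on_e compact_Icc]]
    unfolding bounded_iff by auto
  note C = this[rule_format]
  have "norm (velocity t) \<le> sigma_max G * C" if "t \<in> {0..T}" for t
  proof -
    have "norm (velocity t) = norm (kron G (mat 1) *v (kron (mat 1) (Q t) *v e t))"
      by (simp add: matrix_vector_mul_assoc kron_matrix_mult)
    also have "\<dots> \<le> sigma_max G * norm (kron (mat 1) (Q t) *v e t)"
      by (intro norm_kron_mat1_left_le norm_matrix_vector_le_sigma_max sigma_max_nonneg)
    also have "\<dots> \<le> sigma_max G * (1 * norm (e t))"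
      by (intro mult_left_mono norm_kron_mat1_right_le sigma_max_nonneg)
         (simp_all add: Qbar_norm_le[OF Q_Qbar[OF that]])
    also have "\<dots> \<le> sigma_max G * C"
      using C[OF that] by (simp add: mult_left_mono sigma_max_nonneg)
    finally show ?thesis .
  qed
  moreover have "0 \<le> sigma_max G * C"
    using C[of 0] T_pos sigma_max_nonneg[of G] by (simp add: order_trans[OF norm_ge_zero])
  ultimately show ?thesis
    using that by blast
qed

lemma dissipation_rate_integrable_on: "0 \<le> s \<Longrightarrow> u \<le> T \<Longrightarrow> dissipation_rate integrable_on {s..u}"
  by (rule integrable_on_subinterval[of _ "{0..T}"])
     (auto intro: integrable_kron_form continuous_on_e Q_integrable Q_Qbar)

lemma integrable_kron_form_const: "(\<lambda>t. kron_form (Q t) y y) integrable_on {0..T}"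
  by (intro integrable_kron_form continuous_on_const Q_integrable Q_Qbar)

lemma dissipation_rate_nonneg: "t \<in> {0..T} \<Longrightarrow> 0 \<le> dissipation_rate t"
  by (intro kron_form_nonneg Qbar_psd Q_Qbar)

lemma partial_dissipation_le: "t \<in> {0..T} \<Longrightarrow> integral {0..t} dissipation_rate \<le> dissipation"
  unfolding dissipation_def
  by (intro integral_subset_le dissipation_rate_integrable_on ballI dissipation_rate_nonneg) auto

lemma weighted_average_conserved:
  assumes "r v* G = 0" "t \<in> {0..T}"
  shows "weighted_average r (e t) = weighted_average r (e 0)"
proof -
  have "((weighted_average r \<circ> velocity) has_integral weighted_average r (e t - e 0)) {0..t}"
    by (rule has_integral_linear[OF solution[OF assms(2)] bounded_linear_weighted_average])
  moreover have "weighted_average r \<circ> velocity = (\<lambda>_. 0)"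
    by (simp add: fun_eq_iff weighted_average_kron_eq_0[OF assms(1)])
  ultimately have "weighted_average r (e t - e 0) = 0"
    using has_integral_unique[OF has_integral_0] by metis
  then show ?thesis
    by (simp add: weighted_average_diff)
qed

lemma dissipation_nonneg: "0 \<le> dissipation"
  unfolding dissipation_def
  by (intro integral_nonneg dissipation_rate_integrable_on dissipation_rate_nonneg) (use T_pos in auto)

lemma gain_ge_1: "1 \<le> gain"
  by (simp add: gain_def)

lemma displacement_le:
  assumes t: "t \<in> {0..T}"
  shows "norm (e t - e 0)^2 \<le> T * gain^2 * dissipation"
proof -
  define w where "w = e t - e 0"
  define m where "m = 1 / (T * gain^2)"
  define c where "c = m * (sigma_max G * norm w)^2 / 2"
  define d where "d = 1 / (2 * m)"
  have m: "0 < m"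
    using T_pos gain_ge_1 by (simp add: m_def)
  have w_int: "w = integral {0..t} velocity"
    unfolding w_def using t by (intro increment_eq_integral) auto
  have vel_int: "velocity integrable_on {0..t}"
    using t by (intro velocity_integrable_on) auto
  have rate_int: "dissipation_rate integrable_on {0..t}"
    using t by (intro dissipation_rate_integrable_on) auto
  have "w \<bullet> w = integral {0..t} (\<lambda>u. w \<bullet> velocity u)"
    using integral_linear[OF vel_int bounded_linear_inner_right[of w]] w_int by (simp add: o_def)
  also have "\<dots> \<le> integral {0..t} (\<lambda>u. c + d * dissipation_rate u)"
  proof (rule integral_le)
    show "(\<lambda>u. w \<bullet> velocity u) integrable_on {0..t}"
      using integrable_linear[OF vel_int bounded_linear_inner_right[of w]] by (simp add: o_def)
    show "(\<lambda>u. c + d * dissipation_rate u) integrable_on {0..t}"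
      using integrable_on_mult_right[OF rate_int, of d] by (intro integrable_add) auto
    fix u assume "u \<in> {0..t}"
    then have "2 * (w \<bullet> velocity u) \<le> m * (sigma_max G * norm w)^2 + dissipation_rate u / m"
      using t by (intro inner_kron_twice_le m Q_Qbar) auto
    then show "w \<bullet> velocity u \<le> c + d * dissipation_rate u"
      using m by (simp add: c_def d_def field_simps)
  qed
  also have "\<dots> = t * c + d * integral {0..t} dissipation_rate"
    using t by (simp add: integral_add[OF integrable_const_ivl integrable_on_mult_right[OF rate_int]]
        integral_mult_right content_real)
  also have "\<dots> \<le> T * c + d * dissipation"
    using t m partial_dissipation_le[OF t] by (intro add_mono mult_right_mono mult_left_mono)
      (auto simp: c_def d_def)
  also have "\<dots> \<le> norm w^2 / 2 + T * gain^2 * dissipation / 2"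
  proof -
    have "(sigma_max G * norm w)^2 \<le> (gain * norm w)^2"
      by (intro power_mono mult_right_mono) (auto simp: gain_def sigma_max_nonneg)
    then have "T * c \<le> T * (m * (gain * norm w)^2 / 2)"
      using T_pos m by (simp add: c_def)
    also have "\<dots> = norm w^2 / 2"
      using T_pos gain_ge_1 by (simp add: m_def power_mult_distrib)
    finally show ?thesis
      using T_pos gain_ge_1 by (simp add: m_def d_def)
  qed
  finally show ?thesis
    by (simp add: w_def power2_norm_eq_inner)
qed

lemma excitation_le_dissipation:
  "integral {0..T} (\<lambda>t. kron_form (Q t) (e 0) (e 0)) \<le> (1 + T * gain)^2 * dissipation"
proof -
  define l where "l = T * gain"
  define K where "K = (1 + 1 / l) * (T * gain^2 * dissipation)"
  have l: "0 < l"
    using T_pos gain_ge_1 by (simp add: l_def)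
  have "integral {0..T} (\<lambda>t. kron_form (Q t) (e 0) (e 0))
      \<le> integral {0..T} (\<lambda>t. (1 + l) * dissipation_rate t + K)"
  proof (rule integral_le)
    show "(\<lambda>t. (1 + l) * dissipation_rate t + K) integrable_on {0..T}"
      using integrable_on_mult_right[OF dissipation_rate_integrable_on[of 0 T], of "1 + l"]
      by (intro integrable_add) auto
    fix t assume t: "t \<in> {0..T}"
    have "kron_form (Q t) (e t + (e 0 - e t)) (e t + (e 0 - e t))
        \<le> (1 + l) * dissipation_rate t + (1 + 1 / l) * norm (e 0 - e t)^2"
      by (rule kron_form_add_le[OF Q_Qbar[OF t] l])
    also have "\<dots> \<le> (1 + l) * dissipation_rate t + K"
      unfolding K_def using l displacement_le[OF t]
      by (intro add_left_mono mult_left_mono) (auto simp: norm_minus_commute)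
    finally show "kron_form (Q t) (e 0) (e 0) \<le> (1 + l) * dissipation_rate t + K"
      by simp
  qed (rule integrable_kron_form_const)
  also have "\<dots> = (1 + l) * dissipation + T * K"
    using T_pos
    by (simp add: dissipation_def integral_mult_right content_real
        integral_add[OF integrable_on_mult_right[OF dissipation_rate_integrable_on] integrable_const_ivl])
  also have "\<dots> = (1 + T * gain)^2 * dissipation"
    using l T_pos by (simp add: K_def l_def field_simps power2_eq_square)
  finally show ?thesis .
qed

lemma energy_identity:
  fixes W :: "real^('p \<times> 'n)^('p \<times> 'n)"
  assumes W_sym: "transpose W = W"
    and lyapunov: "\<And>t. t \<in> {0..T} \<Longrightarrow> 2 * (e t \<bullet> (W *v velocity t)) = - dissipation_rate t"
  shows "e T \<bullet> (W *v e T) = e 0 \<bullet> (W *v e 0) - dissipation"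
proof -
  obtain B where B: "0 \<le> B" "\<And>t. t \<in> {0..T} \<Longrightarrow> norm (velocity t) \<le> B"
    using velocity_bounded by blast
  have lyapunov_int:
      "integral {s..u} (\<lambda>t. 2 * (e t \<bullet> (W *v velocity t))) = - integral {s..u} dissipation_rate"
    and lyapunov_integrable: "(\<lambda>t. 2 * (e t \<bullet> (W *v velocity t))) integrable_on {s..u}"
    if "0 \<le> s" "u \<le> T" for s u
  proof -
    have eq: "- dissipation_rate t = 2 * (e t \<bullet> (W *v velocity t))" if "t \<in> {s..u}" for t
      using that \<open>0 \<le> s\<close> \<open>u \<le> T\<close> lyapunov[of t] by simp
    have rate_int: "dissipation_rate integrable_on {s..u}"
      using that by (rule dissipation_rate_integrable_on)
    show "(\<lambda>t. 2 * (e t \<bullet> (W *v velocity t))) integrable_on {s..u}"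
      by (rule integrable_eq[OF integrable_neg[OF rate_int] eq])
    have "- integral {s..u} dissipation_rate = integral {s..u} (\<lambda>t. - dissipation_rate t)"
      by (rule integral_neg[symmetric])
    also have "\<dots> = integral {s..u} (\<lambda>t. 2 * (e t \<bullet> (W *v velocity t)))"
      by (rule integral_cong[OF eq])
    finally show
      "integral {s..u} (\<lambda>t. 2 * (e t \<bullet> (W *v velocity t))) = - integral {s..u} dissipation_rate"
      by simp
  qed
  have "e T \<bullet> (W *v e T) - e 0 \<bullet> (W *v e 0) = integral {0..T} (\<lambda>t. 2 * (e t \<bullet> (W *v velocity t)))"
  proof (rule integral_eq_of_quadratic_remainder[where C = "3 * sigma_max W * B^2"])
    fix s u assume su: "0 \<le> s" "s \<le> u" "u \<le> T"
    show "\<bar>e u \<bullet> (W *v e u) - e s \<bullet> (W *v e s) - integral {s..u} (\<lambda>t. 2 * (e t \<bullet> (W *v velocity t)))\<bar>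
        \<le> 3 * sigma_max W * B^2 * (u - s)^2"
      using su by (intro quadratic_form_remainder W_sym velocity_integrable_on B(2) increment_eq_integral
          lyapunov_integrable) auto
  qed (use T_pos lyapunov_integrable in auto)
  then show ?thesis
    using T_pos lyapunov_int[of 0 T] by (simp add: dissipation_def)
qed

end

section \<open>The contraction estimate\<close>

lemma delta_eps_mult_le:
  fixes \<epsilon> T g :: real
  assumes "0 < \<epsilon>" "\<epsilon> \<le> T" "1 \<le> g"
  shows "delta_eps \<epsilon> T * (1 + T * g)^2 \<le> \<epsilon> * g^3"
proof -
  have T: "0 < T"
    using assms by simp
  have d0: "0 \<le> delta_eps \<epsilon> T"
    using assms T by (simp add: delta_eps_def)
  have main: "delta_eps \<epsilon> T * (1 + T)^2 \<le> \<epsilon>"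
  proof (cases "T \<le> 2/5")
    case True
    have "(1 + T)^2 \<le> (7/5)^2"
      using True T by (intro power_mono) auto
    then have "(1 + T)^2 \<le> 2"
      by (simp add: power2_eq_square)
    moreover have "delta_eps \<epsilon> T \<le> \<epsilon> / 2"
      by (simp add: delta_eps_def)
    ultimately have "delta_eps \<epsilon> T * (1 + T)^2 \<le> \<epsilon> / 2 * 2"
      using d0 by (intro mult_mono) auto
    then show ?thesis
      by simp
  next
    case False
    have "\<epsilon>^3 \<le> \<epsilon> * T^2"
      using assms by (simp add: power3_eq_cube power2_eq_square mult_mono)
    then have "delta_eps \<epsilon> T \<le> \<epsilon> * T^2 / (240 * T^5)"
      using T by (simp add: delta_eps_def min.coboundedI2 divide_right_mono)
    also have "\<dots> = \<epsilon> / (240 * T^3)"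
      using T by (simp add: power_numeral_reduce field_simps)
    finally have "delta_eps \<epsilon> T * (1 + T)^2 \<le> \<epsilon> / (240 * T^3) * (1 + T)^2"
      by (rule mult_right_mono) simp
    also have "\<dots> \<le> \<epsilon>"
    proof -
      have "(1 + T)^2 \<le> (7/2 * T)^2"
        using False by (intro power_mono) auto
      also have "\<dots> \<le> 240 * T^3"
        using False by (simp add: power2_eq_square power3_eq_cube)
      finally show ?thesis
        using T assms by (simp add: field_simps)
    qed
    finally show ?thesis .
  qed
  have "(1 + T * g)^2 \<le> (1 + T)^2 * g^3"
  proof -
    have "(1 + T * g)^2 \<le> ((1 + T) * g)^2"
      using T assms by (intro power_mono) (auto simp: algebra_simps)
    also have "\<dots> \<le> (1 + T)^2 * g^3"
      using assms by (simp add: power_mult_distrib power_increasing)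
    finally show ?thesis .
  qed
  then have "delta_eps \<epsilon> T * (1 + T * g)^2 \<le> delta_eps \<epsilon> T * ((1 + T)^2 * g^3)"
    using d0 by (rule mult_left_mono)
  also have "\<dots> = (delta_eps \<epsilon> T * (1 + T)^2) * g^3"
    by (simp add: mult_ac)
  also have "\<dots> \<le> \<epsilon> * g^3"
    using main assms by (intro mult_right_mono) auto
  finally show ?thesis .
qed

lemma contraction_of_dissipation:
  fixes V0 V1 S \<sigma> \<epsilon> T g n :: real
  assumes energy: "V1 = V0 - S" and "0 \<le> S" and upper: "V0 \<le> \<sigma> * n" and "0 \<le> \<sigma>" "0 \<le> n"
    and excitation: "\<epsilon> * n \<le> (1 + T * g)^2 * S" and "0 < \<epsilon>" "\<epsilon> \<le> T" "1 \<le> g"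
  shows "V1 \<le> (1 - delta_eps \<epsilon> T / (\<sigma> * g^3)) * V0"
proof (cases "\<sigma> = 0")
  case False
  define \<delta> where "\<delta> = delta_eps \<epsilon> T"
  have "0 \<le> \<delta>" "0 < g^3"
    using assms by (auto simp: \<delta>_def delta_eps_def)
  have "0 \<le> T * g"
    using assms by simp
  then have "0 < (1 + T * g)^2"
    by (intro zero_less_power) linarith
  have "\<delta> * n * (1 + T * g)^2 = (\<delta> * (1 + T * g)^2) * n"
    by (simp add: mult_ac)
  also have "\<dots> \<le> \<epsilon> * g^3 * n"
    using delta_eps_mult_le[OF assms(7-9)] \<open>0 \<le> n\<close> unfolding \<delta>_def by (rule mult_right_mono)
  also have "\<dots> \<le> g^3 * ((1 + T * g)^2 * S)"
    using excitation \<open>0 < g^3\<close> by (simp add: mult_left_mono mult_ac)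
  finally have "\<delta> * n \<le> g^3 * S"
    using \<open>0 < (1 + T * g)^2\<close> by (simp add: mult_ac)
  have "\<delta> / (\<sigma> * g^3) * V0 \<le> \<delta> / (\<sigma> * g^3) * (\<sigma> * n)"
    using upper \<open>0 \<le> \<delta>\<close> \<open>0 \<le> \<sigma>\<close> \<open>0 < g^3\<close> by (intro mult_left_mono) auto
  also have "\<dots> = \<delta> * n / g^3"
    using False by simp
  also have "\<dots> \<le> S"
    using \<open>\<delta> * n \<le> g^3 * S\<close> \<open>0 < g^3\<close> by (simp add: divide_le_eq mult.commute)
  finally have "\<delta> / (\<sigma> * g^3) * V0 \<le> S" .
  then show ?thesis
    using energy by (simp add: \<delta>_def algebra_simps)
qed (use energy \<open>0 \<le> S\<close> in simp)

lemma max_one_power: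
  assumes "0 \<le> (s::real)"
  shows "max 1 (s^n) = (max 1 s)^n"
proof (cases "s \<le> 1")
  case True
  then show ?thesis
    using assms by (simp add: max_absorb1 power_le_one)
next
  case False
  then show ?thesis
    by (simp add: max_absorb2 one_le_power)
qed

theorem theorem3:
  fixes \<Gamma> \<Omega> :: "real^'p::finite^'p" and r :: "real^'p"
    and Q :: "real \<Rightarrow> real^'n::finite^'n" and x :: "real \<Rightarrow> real^('p \<times> 'n)"
    and \<epsilon> T :: real
  assumes "connected_interconnection \<Gamma>"
    and "r v* \<Gamma> = 0" and "r \<bullet> 1 = 1"
    and "transpose \<Omega> = \<Omega>" and "\<forall>v. v \<noteq> 0 \<longrightarrow> 0 < v \<bullet> (\<Omega> *v v)"
    and "transpose (\<Gamma> - ones_r r) ** \<Omega> + \<Omega> ** (\<Gamma> - ones_r r) = - mat 1"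
    and "0 < \<epsilon>" and "0 < T"
    and "\<forall>t\<ge>0. Q t \<in> Qbar"
    and "\<forall>t\<ge>0. riemann_integrable_on Q 0 t"
    and "sigma_min (integral {0..T} Q) \<ge> \<epsilon>"
    and "\<forall>t\<in>{0..T}. ((\<lambda>s. kron \<Gamma> (Q s) *v x s) has_integral (x t - x 0)) {0..t}"
  shows "let V = (\<lambda>y. y \<bullet> (kron \<Omega> (mat 1) *v y));
             \<rho> = sigma_max \<Omega> * max 1 (sigma_max \<Gamma> ^ 3);
             xbar = kron (ones_r r) (mat 1) *v x 0
         in V (x T - xbar) \<le> (1 - delta_eps \<epsilon> T / \<rho>) * V (x 0 - xbar)"
  \<comment> \<open>Connectivity and positive definiteness of \<open>\<Omega>\<close> only guarantee that \<open>r\<close> and \<open>\<Omega>\<close> exist;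
    the argument uses just the zero row sums of \<open>\<Gamma>\<close> and the Lyapunov equation.\<close>
proof -
  define xbar where "xbar = kron (ones_r r) (mat 1) *v x 0"
  define e where "e t = x t - xbar" for t
  define V where "V y = y \<bullet> (kron \<Omega> (mat 1) *v y)" for y :: "real^('p \<times> 'n)"
  have "ct_interconnection \<Gamma>"
    using assms(1) by (simp add: connected_interconnection_def)
  then have "kron \<Gamma> (Q s) *v x s = kron \<Gamma> (Q s) *v e s" for s
    using kron_consensus_eq_0 by (simp add: e_def xbar_def matrix_vector_mult_diff_distrib)
  then interpret kron_flow \<Gamma> Q e T
    using assms(8,9,12) riemann_integrable_on_imp_integrable_on[of Q 0 T] assms(10)
    by unfold_locales (auto simp: e_def)
  have "weighted_average r (e t) = 0" if "t \<in> {0..T}" for t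
    using weighted_average_conserved[OF assms(2) that]
    by (simp add: e_def xbar_def weighted_average_diff weighted_average_consensus[OF assms(3)])
  moreover have "transpose (kron \<Omega> (mat 1)) = kron \<Omega> (mat 1)"
    using assms(4) by (simp add: transpose_kron)
  ultimately have "V (e T) = V (e 0) - dissipation"
    unfolding V_def
    by (intro energy_identity) (auto intro!: lyapunov_kron_identity[OF assms(4,6)] Qbar_symmetric Q_Qbar)
  moreover have "\<epsilon> \<le> T"
    using sigma_min_integral_le_length[OF Q_integrable Q_Qbar] assms(8,11) by fastforce
  moreover have "\<epsilon> * norm (e 0)^2 \<le> (1 + T * gain)^2 * dissipation"
    using excitation_lower_bound[OF Q_integrable Q_Qbar, of "e 0"] excitation_le_dissipation assms(11)
    by (meson mult_right_mono order_trans zero_le_power2)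
  ultimately have "V (e T) \<le> (1 - delta_eps \<epsilon> T / (sigma_max \<Omega> * gain^3)) * V (e 0)"
    using assms(7) gain_ge_1 dissipation_nonneg sigma_max_nonneg
    by (intro contraction_of_dissipation[where n = "norm (e 0)^2"])
       (auto simp: V_def quadratic_form_kron_mat1_le)
  then show ?thesis
    by (simp add: Let_def V_def e_def xbar_def gain_def max_one_power sigma_max_nonneg)
qed

end
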